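(* Let $q>1$ and let $\rho$ be a positive $2\pi$-periodic $C^2$ function with $(\ln\rho)''(t)<\sqrt{q}/(1+\sqrt{q})$ for all $t$. For $\eta\in\mathbb{S}^1$ and $j,l\in\{1,2\}$ let $\mathcal{T}_{j,l}\eta$ be defined as follows: with $\eta_l=(-1)^{l-1}\eta$, $\theta_q=\arccos(1/\sqrt{q})$ and $h(\theta)=\frac{\sqrt{q}\sin\theta}{\sqrt{q}\cos\theta+1}$, the equation $(\ln\rho)'(\theta)=h(\theta-\theta_{\eta_l})$ has exactly two solutions $\theta\in\mathbb{R}/(2\pi\mathbb{Z})$; $\mathcal{T}_{1,l}\eta$ is the one with $\theta-\theta_{\eta_l}\in(\theta_q-\pi,\pi-\theta_q)$ and $\mathcal{T}_{2,l}\eta$ the one with $\theta-\theta_{\eta_l}\in(\pi-\theta_q,\pi+\theta_q)$ (mod $2\pi$). Then for each $\eta\in\mathbb{S}^1$ and each $l\in\{1,2\}$ (with $l+1$ taken in $\{1,2\}$ modulo $2$), $$\operatorname{sgn}\rho'(\mathcal{T}_{1,l}\eta)=(-1)^{l-1}\operatorname{sgn}\sin(\mathcal{T}_{1,l}\eta-\theta_\eta)=(-1)^{l-1}\operatorname{sgn}\sin(\mathcal{T}_{2,l+1}\eta-\theta_\eta)=\operatorname{sgn}\rho'(\mathcal{T}_{2,l+1}\eta).$$ Moreover, for each $l\in\{1,2\}$ and every $\eta\in\mathbb{S}^1$ with $\rho'(\theta_{\eta_l})\neq0$, one has $0<|\mathcal{T}_{2,l+1}\eta-\theta_{\eta_l}|<|\mathcal{T}_{1,l}\eta-\theta_{\eta_l}|<\pi-\theta_q$,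 and $$\rho(\mathcal{T}_{2,l+1}\eta)<\rho(\mathcal{T}_{1,l}\eta)\quad\text{and}\quad 0<|\sin(\mathcal{T}_{2,l+1}\eta-\theta_\eta)|<|\sin(\mathcal{T}_{1,l}\eta-\theta_\eta)|.$$
   Context: We identify $\mathbb{S}^1$ with $\mathbb{R}/(2\pi\mathbb{Z})$ via $\theta\mapsto(\cos\theta,\sin\theta)^T$; $\theta_\eta$ denotes the angular coordinate of $\eta$. Differences of angles such as $\mathcal{T}_{1,l}\eta-\theta_{\eta_l}$ and $\mathcal{T}_{2,l+1}\eta-\theta_{\eta_l}$ are taken as their representatives in $(-\pi,\pi]$ (so the first lies in $(\theta_q-\pi,\pi-\theta_q)$ and the second in $(-\theta_q,\theta_q)$). *)

theory Defs
  imports "HOL-Analysis.Analysis"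
begin

text \<open>Points of S^1 are unit complex numbers; the angular coordinate is Arg (in (-pi,pi]).\<close>

definition wrap :: "real \<Rightarrow> real" where
  "wrap x = x - 2 * pi * of_int \<lceil>(x - pi) / (2 * pi)\<rceil>"
  \<comment> \<open>representative of x mod 2pi in (-pi, pi]\<close>

definition theta_q :: "real \<Rightarrow> real" where
  "theta_q q = arccos (1 / sqrt q)"

definition hq :: "real \<Rightarrow> real \<Rightarrow> real" where
  "hq q \<theta> = sqrt q * sin \<theta> / (sqrt q * cos \<theta> + 1)"

definition C2 :: "(real \<Rightarrow> real) \<Rightarrow> bool" where
  "C2 f \<longleftrightarrow> (\<forall>t. f differentiable at t) \<and> (\<forall>t. deriv f differentiable at t)
      \<and> continuous_on UNIV (deriv (deriv f))"

text \<open>eta_l = (-1)^(l-1) eta; T j l eta is the solution theta in (-pi,pi] of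
  (ln rho)'(theta) = h(theta - theta_{eta_l}) with theta - theta_{eta_l} in
  (theta_q - pi, pi - theta_q) (j = 1) resp. (pi - theta_q, pi + theta_q) mod 2pi (j = 2).\<close>

definition Tmap :: "(real \<Rightarrow> real) \<Rightarrow> real \<Rightarrow> nat \<Rightarrow> nat \<Rightarrow> complex \<Rightarrow> real" where
  "Tmap \<rho> q j l \<eta> =
     (let a = Arg ((-1) ^ (l - 1) * \<eta>) in
      THE \<theta>. \<theta> \<in> {-pi<..pi} \<and>
            deriv (\<lambda>t. ln (\<rho> t)) \<theta> = hq q (\<theta> - a) \<and>
            (if j = 1 then wrap (\<theta> - a) \<in> {theta_q q - pi <..< pi - theta_q q}
             else \<bar>wrap (\<theta> - a)\<bar> > pi - theta_q q))"

end

(*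
  Write G = (ln rho)'(theta_{eta_l} + .).  The function h has poles at +-(pi - theta_q) mod 2 pi;
  on the branch (theta_q - pi, pi - theta_q) and on the branch (pi - theta_q, pi + theta_q) it
  increases from -infinity to +infinity with slope at least sqrt q / (1 + sqrt q), whereas G has
  slope below that bound.  So G - h is strictly decreasing on each branch, vanishes at exactly one
  point x resp. y + pi, and its sign there is the sign of (x - t) resp. (y + pi - t); the two
  solutions are T_{1,l} eta = theta_{eta_l} + x and T_{2,l+1} eta = theta_{eta_l} + y (mod 2 pi).
  Since h vanishes at 0 and pi, evaluating at t = 0 gives sgn x = sgn y = sgn rho'(theta_{eta_l}),
  from which the sign identities follow.  If G 0 > 0, then G y = h (y + pi) > h y forces y < x,
  and G >= h > 0 on [y, x], so rho increases from T_{2,l+1} eta to T_{1,l} eta; the case G 0 < 0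
  is the mirror image under t |-> -t.
*)
theory Submission
  imports Defs
begin

lemma wrap_in_range: "wrap t \<in> {-pi<..pi}"
proof -
  let ?c = "\<lceil>(t - pi) / (2 * pi)\<rceil>"
  have "(t + pi) / (2 * pi) = (t - pi) / (2 * pi) + 1"
    by (simp add: field_simps)
  then have "(t - pi) / (2 * pi) \<le> of_int ?c" "of_int ?c < (t + pi) / (2 * pi)"
    by linarith+
  then have "t - pi \<le> of_int ?c * (2 * pi)" "of_int ?c * (2 * pi) < t + pi"
    by (simp_all only: pos_divide_le_eq pos_less_divide_eq pi_gt_zero mult_pos_pos zero_less_numeral)
  then show ?thesis unfolding wrap_def by (simp add: mult.commute[of _ "2 * pi"])
qed

lemma wrap_eq_self: "t \<in> {-pi<..pi} \<Longrightarrow> wrap t = t"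
proof -
  assume "t \<in> {-pi<..pi}"
  then have "\<lceil>(t - pi) / (2 * pi)\<rceil> = 0"
    by (subst ceiling_eq_iff) (auto simp: field_simps)
  then show ?thesis unfolding wrap_def by simp
qed

lemma wrap_add_2pi: "wrap (t + 2 * pi) = wrap t"
proof -
  have "(t + 2 * pi - pi) / (2 * pi) = (t - pi) / (2 * pi) + 1"
    by (simp add: field_simps)
  then have "\<lceil>(t + 2 * pi - pi) / (2 * pi)\<rceil> = \<lceil>(t - pi) / (2 * pi)\<rceil> + 1"
    by simp
  then show ?thesis unfolding wrap_def by (simp add: algebra_simps)
qed

lemma periodic_wrap:
  assumes "\<And>t. f (t + 2 * pi) = f t"
  shows "f (wrap t) = f t"
proof -
  interpret periodic_fun_simple f "2 * pi" by standard (rule assms)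
  have "wrap t = t - of_int \<lceil>(t - pi) / (2 * pi)\<rceil> * (2 * pi)"
    unfolding wrap_def by (simp add: mult_ac)
  then show ?thesis using minus_of_int by metis
qed

lemma periodic_wrap_add:
  assumes "\<And>t. f (t + 2 * pi) = f t"
  shows "f (wrap s + b) = f (s + b)"
proof -
  have "f (t + 2 * pi + b) = f (t + b)" for t
    using assms[of "t + b"] by (simp add: algebra_simps)
  then show ?thesis using periodic_wrap[of "\<lambda>t. f (t + b)"] by simp
qed

lemma wrap_wrap_diff: "wrap (wrap (a + u) - a) = wrap u"
  using periodic_wrap_add[of wrap "a + u" "- a"] wrap_add_2pi by simp

lemma abs_wrap_diff_pi: "\<bar>wrap (t - pi)\<bar> = pi - \<bar>wrap t\<bar>"
proof -
  define u where "u = wrap t"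
  have u: "u \<in> {-pi<..pi}" unfolding u_def by (rule wrap_in_range)
  have "wrap (t - pi) = wrap (u - pi)"
    unfolding u_def using periodic_wrap_add[of wrap t "-pi"] wrap_add_2pi by simp
  also have "\<dots> = (if u > 0 then u - pi else u + pi)"
  proof (cases "u > 0")
    case True
    then show ?thesis using u by (simp add: wrap_eq_self)
  next
    case False
    have "wrap (u - pi) = wrap (u + pi)" using wrap_add_2pi[of "u - pi"] by (simp add: add.commute)
    also have "\<dots> = u + pi" using False u by (intro wrap_eq_self) auto
    finally show ?thesis using False by simp
  qed
  finally show ?thesis using u by (auto simp flip: u_def)
qed

lemma periodic_Arg_minus:
  assumes "\<And>t. f (t + 2 * pi) = f t" "z \<noteq> 0"
  shows "f (Arg (- z)) = f (Arg z + pi)"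
  using Arg_minus[OF assms(2)] assms(1)[of "Arg z - pi"] by (auto simp: algebra_simps)

lemma deriv_periodic:
  assumes "\<And>t. f (t + p) = f t"
  shows "deriv f (t + p) = deriv f t"
proof -
  have "(\<lambda>s. f (s + p)) = f" using assms by auto
  then show ?thesis unfolding deriv_def DERIV_shift by simp
qed

lemma the_wrap_eqI:
  assumes periodic: "\<And>\<theta>. P (\<theta> + 2 * pi) = P \<theta>"
    and unique: "\<And>u. \<bar>u - c\<bar> < r \<Longrightarrow> P (a + u) \<longleftrightarrow> u = x"
    and x: "\<bar>x - c\<bar> < r" and r: "r \<le> pi"
  shows "(THE \<theta>. \<theta> \<in> {-pi<..pi} \<and> P \<theta> \<and> \<bar>wrap (\<theta> - a - c)\<bar> < r) = wrap (a + x)"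
proof (rule the_equality)
  have "P (wrap (a + x))"
    using periodic_wrap[of P] periodic unique[OF x] by simp
  moreover have "wrap (wrap (a + x) - a - c) = x - c"
  proof -
    have "x - c \<in> {-pi<..pi}" using x r by auto
    then show ?thesis
      using periodic_wrap_add[of wrap "a + x" "- a - c"] wrap_add_2pi wrap_eq_self[of "x - c"]
      by (simp add: algebra_simps)
  qed
  ultimately show "wrap (a + x) \<in> {-pi<..pi} \<and> P (wrap (a + x)) \<and> \<bar>wrap (wrap (a + x) - a - c)\<bar> < r"
    using wrap_in_range x by simp
next
  fix \<theta> assume \<theta>: "\<theta> \<in> {-pi<..pi} \<and> P \<theta> \<and> \<bar>wrap (\<theta> - a - c)\<bar> < r"
  define u where "u = c + wrap (\<theta> - a - c)"
  have "wrap (a + u) = \<theta>"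
    using periodic_wrap_add[of wrap "\<theta> - a - c" "a + c"] wrap_add_2pi wrap_eq_self[of \<theta>] \<theta>
    by (simp add: u_def algebra_simps)
  then have "P (a + u)" using periodic_wrap[of P "a + u"] periodic \<theta> by simp
  moreover have "\<bar>u - c\<bar> < r" using \<theta> by (simp add: u_def)
  ultimately show "\<theta> = wrap (a + x)" using unique \<open>wrap (a + u) = \<theta>\<close> by blast
qed

lemma theta_q_bounds:
  assumes "q > 1"
  shows "0 < theta_q q" "theta_q q < pi / 2" "cos (theta_q q) = 1 / sqrt q"
proof -
  have "0 < 1 / sqrt q" "1 / sqrt q < 1" using assms by auto
  then show "cos (theta_q q) = 1 / sqrt q" "0 < theta_q q"
    unfolding theta_q_def using arccos_lt_bounded[of "1 / sqrt q"] cos_arccos[of "1 / sqrt q"]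
    by linarith+
  have "arccos (1 / sqrt q) < arccos 0"
    using \<open>0 < 1 / sqrt q\<close> \<open>1 / sqrt q < 1\<close> by (intro arccos_less_arccos) auto
  then show "theta_q q < pi / 2" unfolding theta_q_def by simp
qed

lemma hq_denominator_pos:
  assumes "q > 1" "\<bar>t\<bar> < pi - theta_q q"
  shows "0 < sqrt q * cos t + 1"
proof -
  note \<theta> = theta_q_bounds[OF assms(1)]
  have "cos (pi - theta_q q) < cos \<bar>t\<bar>" using \<theta> assms by (intro cos_monotone_0_pi) auto
  then have "- 1 < sqrt q * cos t" using \<theta> assms(1) by (simp add: field_simps)
  then show ?thesis by simp
qed

lemma hq_denominator_neg:
  assumes "q > 1" "\<bar>t - pi\<bar> < theta_q q"
  shows "sqrt q * cos t + 1 < 0"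
proof -
  note \<theta> = theta_q_bounds[OF assms(1)]
  have "cos (theta_q q) < cos \<bar>t - pi\<bar>" using \<theta> assms by (intro cos_monotone_0_pi) auto
  then have "1 < - sqrt q * cos t" using \<theta> assms(1) by (simp add: cos_diff field_simps)
  then show ?thesis by simp
qed

lemma hq_minus: "hq q (- t) = - hq q t"
  by (simp add: hq_def)

lemma hq_add_2pi: "hq q (t + 2 * pi) = hq q t"
  by (simp add: hq_def)

lemma hq_0 [simp]: "hq q 0 = 0" and hq_pi [simp]: "hq q pi = 0"
  by (simp_all add: hq_def)

lemma hq_has_real_derivative:
  assumes "sqrt q * cos t + 1 \<noteq> 0"
  shows "(hq q has_real_derivative sqrt q * (sqrt q + cos t) / (sqrt q * cos t + 1)\<^sup>2) (at t)"
proof -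
  have hq: "hq q = (\<lambda>t. sqrt q * sin t / (sqrt q * cos t + 1))"
    by (simp add: hq_def fun_eq_iff)
  have numerator: "sqrt q * cos t * (sqrt q * cos t + 1) - sqrt q * sin t * (- sqrt q * sin t)
      = sqrt q * (sqrt q + cos t)"
    using sin_cos_squared_add[of t] by algebra
  have "((\<lambda>t. sqrt q * sin t) has_real_derivative sqrt q * cos t) (at t)"
    "((\<lambda>t. sqrt q * cos t + 1) has_real_derivative - sqrt q * sin t) (at t)"
    by (auto intro!: derivative_eq_intros)
  from DERIV_divide[OF this assms] show ?thesis
    unfolding hq numerator power2_eq_square .
qed

text \<open>The slope of \<open>h\<close> is at least \<open>\<surd>q / (1 + \<surd>q)\<close> on every branch, because
  \<open>(1 + r) (r + c) - (r c + 1)\<^sup>2 = r\<^sup>2 (1 - c\<^sup>2) + (r - 1) (1 - c)\<close>.\<close>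
lemma hq_slope_lower_bound:
  assumes "q > 1" "sqrt q * cos t + 1 \<noteq> 0"
  shows "sqrt q / (1 + sqrt q) \<le> sqrt q * (sqrt q + cos t) / (sqrt q * cos t + 1)\<^sup>2"
proof -
  define r c where "r = sqrt q" and "c = cos t"
  have r: "r > 1" using assms unfolding r_def by simp
  have c: "c\<^sup>2 \<le> 1" "c \<le> 1" unfolding c_def by (auto simp: abs_square_le_1)
  have "(1 + r) * (r + c) - (r * c + 1)\<^sup>2 = r\<^sup>2 * (1 - c\<^sup>2) + (r - 1) * (1 - c)"
    by (simp add: algebra_simps power2_eq_square)
  also have "\<dots> \<ge> 0" using r c by simp
  finally have "r * (r * c + 1)\<^sup>2 \<le> r * ((1 + r) * (r + c))" using r by simp
  moreover have "(r * c + 1)\<^sup>2 > 0" using assms(2) unfolding r_def c_def by simp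
  ultimately have "r / (1 + r) \<le> r * (r + c) / (r * c + 1)\<^sup>2"
    using r by (simp add: divide_simps mult.commute)
  then show ?thesis unfolding r_def c_def .
qed

lemma sin_ne_0_at_hq_pole:
  assumes "q > 1" "sqrt q * cos p + 1 = 0"
  shows "sin p \<noteq> 0"
proof
  assume "sin p = 0"
  then have "cos p = 1 \<or> cos p = -1" using sin_cos_squared_add[of p] by (simp add: power2_eq_1_iff)
  then have "sqrt q * cos p = sqrt q \<or> sqrt q * cos p = - sqrt q" by auto
  moreover have "sqrt q > 1" using assms(1) by simp
  ultimately show False using assms(2) by linarith
qed

lemma filterlim_hq_at_top_at_pole:
  assumes "q > 1" "sqrt q * cos p + 1 = 0"
    and "eventually (\<lambda>t. 0 < sin p * (sqrt q * cos t + 1)) (at p within S)"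
  shows "filterlim (hq q) at_top (at p within S)"
proof -
  have "sin p \<noteq> 0" using sin_ne_0_at_hq_pole[OF assms(1,2)] .
  then have hq: "hq q = (\<lambda>t. sqrt q * sin p * sin t / (sin p * (sqrt q * cos t + 1)))"
    by (simp add: hq_def fun_eq_iff)
  have "((\<lambda>t. sqrt q * sin p * sin t) \<longlongrightarrow> sqrt q * sin p * sin p) (at p within S)"
    "((\<lambda>t. sin p * (sqrt q * cos t + 1)) \<longlongrightarrow> sin p * (sqrt q * cos p + 1)) (at p within S)"
    by (intro tendsto_intros)+
  moreover have "0 < sqrt q * sin p * sin p"
    using \<open>sin p \<noteq> 0\<close> assms(1) by (auto simp: mult.assoc zero_less_mult_iff linorder_neq_iff)
  ultimately show ?thesis unfolding hq using assms(2,3) by (intro LIM_at_top_divide) auto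
qed

lemma filterlim_hq_at_bot_at_pole:
  assumes "q > 1" "sqrt q * cos p + 1 = 0"
    and "eventually (\<lambda>t. sin p * (sqrt q * cos t + 1) < 0) (at p within S)"
  shows "filterlim (hq q) at_bot (at p within S)"
proof -
  have "sin p \<noteq> 0" using sin_ne_0_at_hq_pole[OF assms(1,2)] .
  then have hq: "(\<lambda>t. - hq q t) = (\<lambda>t. sqrt q * sin p * sin t / (- sin p * (sqrt q * cos t + 1)))"
    by (simp add: hq_def fun_eq_iff)
  have "((\<lambda>t. sqrt q * sin p * sin t) \<longlongrightarrow> sqrt q * sin p * sin p) (at p within S)"
    "((\<lambda>t. - sin p * (sqrt q * cos t + 1)) \<longlongrightarrow> - sin p * (sqrt q * cos p + 1)) (at p within S)"
    by (intro tendsto_intros)+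
  moreover have "0 < sqrt q * sin p * sin p"
    using \<open>sin p \<noteq> 0\<close> assms(1) by (auto simp: mult.assoc zero_less_mult_iff linorder_neq_iff)
  ultimately have "filterlim (\<lambda>t. - hq q t) at_top (at p within S)"
    unfolding hq using assms(2,3) by (intro LIM_at_top_divide) auto
  then show ?thesis by (simp add: filterlim_uminus_at_bot)
qed

lemma exists_zero_between:
  fixes d :: "real \<Rightarrow> real"
  assumes "L < R" and cont: "continuous_on {L<..<R} d"
    and "eventually (\<lambda>t. 0 < d t) (at_right L)" "eventually (\<lambda>t. d t < 0) (at_left R)"
  obtains x where "x \<in> {L<..<R}" "d x = 0"
proof -
  have "eventually (\<lambda>t. t \<in> {L<..<R} \<and> 0 < d t) (at_right L)"
    using assms(3) eventually_at_right_real[OF \<open>L < R\<close>] by eventually_elim auto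
  then obtain u where u: "u \<in> {L<..<R}" "0 < d u"
    using eventually_happens'[OF trivial_limit_at_right_real] by blast
  have "u < R" using u by simp
  have "eventually (\<lambda>t. t \<in> {u<..<R} \<and> d t < 0) (at_left R)"
    using assms(4) eventually_at_left_real[OF \<open>u < R\<close>] by eventually_elim auto
  then obtain v where v: "v \<in> {u<..<R}" "d v < 0"
    using eventually_happens'[OF trivial_limit_at_left_real] by blast
  have "continuous_on {u..v} d"
    using u v by (intro continuous_on_subset[OF cont]) auto
  then obtain x where "u \<le> x" "x \<le> v" "d x = 0"
    using IVT2'[of d v 0 u] u v by auto
  then show thesis using that[of x] u v by auto
qed

lemma crossing_of_steeper:
  fixes f g :: "real \<Rightarrow> real"
  assumes "L < R"
    and f: "\<And>t. (f has_real_derivative f' t) (at t)"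
    and g: "\<And>t. t \<in> {L<..<R} \<Longrightarrow> (g has_real_derivative g' t) (at t)"
    and steeper: "\<And>t. t \<in> {L<..<R} \<Longrightarrow> f' t < g' t"
    and g_L: "filterlim g at_bot (at_right L)" and g_R: "filterlim g at_top (at_left R)"
  obtains x where "x \<in> {L<..<R}" "\<And>t. t \<in> {L<..<R} \<Longrightarrow> sgn (f t - g t) = sgn (x - t)"
proof -
  define d where "d t = f t - g t" for t
  have d_deriv: "(d has_real_derivative f' t - g' t) (at t)" if "t \<in> {L<..<R}" for t
    unfolding d_def[abs_def] using f g that by (intro DERIV_diff)
  have d_decreasing: "d v < d u" if "L < u" "u < v" "v < R" for u v
  proof (rule DERIV_neg_imp_decreasing[OF \<open>u < v\<close>])
    fix t assume "u \<le> t" "t \<le> v"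
    with that have "t \<in> {L<..<R}" by auto
    with d_deriv steeper show "\<exists>y. (d has_real_derivative y) (at t) \<and> y < 0"
      by (intro exI[of _ "f' t - g' t"]) auto
  qed
  have "continuous_on {L<..<R} d"
    using d_deriv by (intro continuous_at_imp_continuous_on ballI DERIV_isCont) blast
  moreover have "eventually (\<lambda>t. 0 < d t) (at_right L)"
  proof -
    have "(f \<longlongrightarrow> f L) (at_right L)"
      using DERIV_isCont[OF f] by (simp add: isCont_def filterlim_at_split)
    moreover have "filterlim (\<lambda>t. - g t) at_top (at_right L)"
      using g_L by (simp add: filterlim_uminus_at_bot)
    ultimately have "filterlim d at_top (at_right L)"
      using filterlim_tendsto_add_at_top unfolding d_def[abs_def] by fastforce
    then show ?thesis unfolding filterlim_at_top_dense by blast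
  qed
  moreover have "eventually (\<lambda>t. d t < 0) (at_left R)"
  proof -
    have "((\<lambda>t. - f t) \<longlongrightarrow> - f R) (at_left R)"
      using DERIV_isCont[OF f] by (intro tendsto_minus) (simp add: isCont_def filterlim_at_split)
    from filterlim_tendsto_add_at_top[OF this g_R]
    have "filterlim (\<lambda>t. - d t) at_top (at_left R)" unfolding d_def by simp
    then have "eventually (\<lambda>t. 0 < - d t) (at_left R)" unfolding filterlim_at_top_dense by blast
    then show ?thesis by simp
  qed
  ultimately obtain x where x: "x \<in> {L<..<R}" "d x = 0"
    using exists_zero_between[OF \<open>L < R\<close>] by blast
  have "sgn (d t) = sgn (x - t)" if "t \<in> {L<..<R}" for t
    using d_decreasing[of t x] d_decreasing[of x t] x that
    by (cases t x rule: linorder_cases) auto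
  then show thesis using that x unfolding d_def by blast
qed

text \<open>Branch j of h: the range of theta - theta_{eta_l} in which T_{j,l} eta is sought, taken as
  an interval of reals between consecutive poles of h rather than modulo 2 pi.\<close>
definition branch :: "real \<Rightarrow> nat \<Rightarrow> real set" where
  "branch q j = (if j = 1 then {theta_q q - pi<..<pi - theta_q q} else {pi - theta_q q<..<pi + theta_q q})"

lemma hq_crossing_between_poles:
  assumes q: "q > 1" and "L < R"
    and poles: "sqrt q * cos L + 1 = 0" "sqrt q * cos R + 1 = 0"
    and signs: "\<And>t. t \<in> {L<..<R} \<Longrightarrow>
      sin L * (sqrt q * cos t + 1) < 0 \<and> 0 < sin R * (sqrt q * cos t + 1)"
    and f: "\<And>t. (f has_real_derivative f' t) (at t)" and f': "\<And>t. f' t < sqrt q / (1 + sqrt q)"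
  obtains x where "x \<in> {L<..<R}" "\<And>t. t \<in> {L<..<R} \<Longrightarrow> sgn (f t - hq q t) = sgn (x - t)"
proof -
  define slope where "slope t = sqrt q * (sqrt q + cos t) / (sqrt q * cos t + 1)\<^sup>2" for t
  have nonzero: "sqrt q * cos t + 1 \<noteq> 0" if "t \<in> {L<..<R}" for t
    using signs[OF that] by auto
  have "(hq q has_real_derivative slope t) (at t)" if "t \<in> {L<..<R}" for t
    unfolding slope_def using nonzero[OF that] by (rule hq_has_real_derivative)
  moreover have "f' t < slope t" if "t \<in> {L<..<R}" for t
    unfolding slope_def using f'[of t] hq_slope_lower_bound[OF q nonzero[OF that]] by linarith
  moreover have "eventually (\<lambda>t. sin L * (sqrt q * cos t + 1) < 0) (at_right L)"
    using eventually_at_right_real[OF \<open>L < R\<close>] by eventually_elim (simp add: signs)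
  then have "filterlim (hq q) at_bot (at_right L)"
    by (rule filterlim_hq_at_bot_at_pole[OF q poles(1)])
  moreover have "eventually (\<lambda>t. 0 < sin R * (sqrt q * cos t + 1)) (at_left R)"
    using eventually_at_left_real[OF \<open>L < R\<close>] by eventually_elim (simp add: signs)
  then have "filterlim (hq q) at_top (at_left R)"
    by (rule filterlim_hq_at_top_at_pole[OF q poles(2)])
  ultimately show thesis
    using crossing_of_steeper[OF \<open>L < R\<close> f, of "hq q" slope] that by blast
qed

lemma hq_crossing:
  assumes q: "q > 1" and j: "j \<in> {1, 2}"
    and f: "\<And>t. (f has_real_derivative f' t) (at t)" and f': "\<And>t. f' t < sqrt q / (1 + sqrt q)"
  obtains x where "x \<in> branch q j" "\<And>t. t \<in> branch q j \<Longrightarrow> sgn (f t - hq q t) = sgn (x - t)"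
proof -
  note \<theta> = theta_q_bounds[OF q]
  have "sin (theta_q q) > 0" using \<theta> by (intro sin_gt_zero) auto
  have "sqrt q * cos (theta_q q) = 1" using \<theta>(3) q by simp
  then have poles: "sqrt q * cos (theta_q q - pi) + 1 = 0" "sqrt q * cos (pi - theta_q q) + 1 = 0"
    "sqrt q * cos (pi + theta_q q) + 1 = 0"
    by (simp_all add: cos_diff cos_add)
  show thesis
  proof (cases "j = 1")
    case True
    have "sin (theta_q q - pi) * (sqrt q * cos t + 1) < 0 \<and> 0 < sin (pi - theta_q q) * (sqrt q * cos t + 1)"
      if "t \<in> {theta_q q - pi<..<pi - theta_q q}" for t
      using hq_denominator_pos[OF q, of t] that \<open>sin (theta_q q) > 0\<close>
      by (simp add: sin_diff mult_neg_pos abs_less_iff)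
    from hq_crossing_between_poles[OF q _ poles(1,2) this f f'] show thesis
      using that \<theta> True unfolding branch_def by auto
  next
    case False
    have "sin (pi - theta_q q) * (sqrt q * cos t + 1) < 0 \<and> 0 < sin (pi + theta_q q) * (sqrt q * cos t + 1)"
      if "t \<in> {pi - theta_q q<..<pi + theta_q q}" for t
      using hq_denominator_neg[OF q, of t] that \<open>sin (theta_q q) > 0\<close>
      by (simp add: sin_add mult_pos_neg mult_neg_neg abs_less_iff)
    from hq_crossing_between_poles[OF q _ poles(2,3) this f f'] show thesis
      using that \<theta> False unfolding branch_def by auto
  qed
qed

lemma sgn_sin: "\<bar>t\<bar> < pi \<Longrightarrow> sgn (sin t) = sgn t"
proof -
  assume "\<bar>t\<bar> < pi"
  then have "0 < t \<Longrightarrow> 0 < sin t" "t < 0 \<Longrightarrow> sin t < 0"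
    using sin_gt_zero[of t] sin_gt_zero[of "- t"] by auto
  then show ?thesis by (cases t "0 :: real" rule: linorder_cases) auto
qed

lemma sgn_hq: "q > 0 \<Longrightarrow> sgn (hq q t) = sgn (sin t) * sgn (sqrt q * cos t + 1)"
  by (simp add: hq_def sgn_mult sgn_divide)

lemma sgn_hq_main_branch:
  assumes "q > 1" "\<bar>t\<bar> < pi - theta_q q"
  shows "sgn (hq q t) = sgn t"
  using hq_denominator_pos[OF assms] assms theta_q_bounds[OF assms(1)] by (simp add: sgn_hq sgn_sin)

lemma sgn_hq_add_pi:
  assumes "q > 1" "\<bar>t\<bar> < theta_q q"
  shows "sgn (hq q (t + pi)) = sgn t"
proof -
  have "sqrt q * cos (t + pi) + 1 < 0" using assms by (intro hq_denominator_neg) auto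
  moreover have "\<bar>t\<bar> < pi" using assms theta_q_bounds[OF assms(1)] by simp
  ultimately show ?thesis using assms(1) by (simp add: sgn_hq sgn_sin)
qed

lemma hq_less_hq_add_pi:
  assumes "q > 1" "0 < t" "t < theta_q q"
  shows "hq q t < hq q (t + pi)"
proof -
  have "sqrt q * cos (t + pi) + 1 < 0" using assms by (intro hq_denominator_neg) auto
  then have "0 < sqrt q * cos t - 1" by simp
  moreover have "0 < sqrt q * sin t"
    using assms theta_q_bounds[OF assms(1)] by (simp add: sin_gt_zero)
  ultimately have "sqrt q * sin t / (sqrt q * cos t + 1) < sqrt q * sin t / (sqrt q * cos t - 1)"
    by (intro divide_strict_left_mono) auto
  also have "\<dots> = hq q (t + pi)"
    by (simp add: hq_def minus_divide_right)
  finally show ?thesis by (simp add: hq_def)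
qed

lemma abs_sin_less:
  assumes "\<bar>y\<bar> < \<bar>x\<bar>" "\<bar>x\<bar> + \<bar>y\<bar> < pi"
  shows "\<bar>sin y\<bar> < \<bar>sin x\<bar>"
proof -
  have abs_sin: "\<bar>sin t\<bar> = sin \<bar>t\<bar>" if "\<bar>t\<bar> \<le> pi" for t
    using that sin_ge_zero[of t] sin_ge_zero[of "- t"] by (cases "t \<ge> 0") auto
  have "sin \<bar>y\<bar> < sin \<bar>x\<bar>"
  proof (cases "\<bar>x\<bar> \<le> pi / 2")
    case True
    then show ?thesis using assms by (subst sin_mono_less_eq) auto
  next
    case False
    have "sin \<bar>y\<bar> < sin (pi - \<bar>x\<bar>)" using assms False by (subst sin_mono_less_eq) auto
    then show ?thesis by simp
  qed
  then show ?thesis using abs_sin assms by simp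
qed

lemma crossings_ordered_pos:
  fixes G \<Lambda> :: "real \<Rightarrow> real"
  assumes q: "q > 1"
    and \<Lambda>: "\<And>t. (\<Lambda> has_real_derivative G t) (at t)"
    and x: "\<bar>x\<bar> < pi - theta_q q"
      "\<And>t. \<bar>t\<bar> < pi - theta_q q \<Longrightarrow> sgn (G t - hq q t) = sgn (x - t)"
    and y: "\<bar>y\<bar> < theta_q q"
      "\<And>t. \<bar>t\<bar> < theta_q q \<Longrightarrow> sgn (G t - hq q (t + pi)) = sgn (y - t)"
    and G0: "G 0 > 0"
  shows "0 < y \<and> y < x \<and> \<Lambda> y < \<Lambda> x"
proof -
  note \<theta> = theta_q_bounds[OF q]
  have "0 < y" using y(2)[of 0] G0 \<theta> by (simp add: sgn_if split: if_splits)
  have "hq q y < hq q (y + pi)" using hq_less_hq_add_pi[OF q \<open>0 < y\<close>] y(1) by simp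
  also have "\<dots> = G y" using y(2)[of y] y(1) by (simp add: sgn_eq_0_iff)
  finally have "y < x" using x(2)[of y] y(1) \<theta> by (simp add: sgn_if split: if_splits)
  have "0 < G t" if "y \<le> t" "t \<le> x" for t
  proof -
    have t: "\<bar>t\<bar> < pi - theta_q q" "0 < t" using that x(1) \<open>0 < y\<close> by auto
    have "0 < hq q t" using sgn_hq_main_branch[OF q t(1)] t(2) by (simp add: sgn_if split: if_splits)
    moreover have "hq q t \<le> G t" using x(2)[OF t(1)] that by (simp add: sgn_if split: if_splits)
    ultimately show ?thesis by simp
  qed
  then have "\<Lambda> y < \<Lambda> x"
    using \<open>y < x\<close> \<Lambda> by (metis DERIV_pos_imp_increasing)
  with \<open>0 < y\<close> \<open>y < x\<close> show ?thesis by simp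
qed

text \<open>The case \<open>G 0 < 0\<close> reduces to \<open>G 0 > 0\<close> under \<open>t \<mapsto> -t\<close>, as \<open>h\<close> is odd.\<close>
lemma crossings_ordered:
  fixes G \<Lambda> :: "real \<Rightarrow> real"
  assumes q: "q > 1"
    and \<Lambda>: "\<And>t. (\<Lambda> has_real_derivative G t) (at t)"
    and x: "\<bar>x\<bar> < pi - theta_q q"
      "\<And>t. \<bar>t\<bar> < pi - theta_q q \<Longrightarrow> sgn (G t - hq q t) = sgn (x - t)"
    and y: "\<bar>y\<bar> < theta_q q"
      "\<And>t. \<bar>t\<bar> < theta_q q \<Longrightarrow> sgn (G t - hq q (t + pi)) = sgn (y - t)"
    and G0: "G 0 \<noteq> 0"
  shows "0 < \<bar>y\<bar> \<and> \<bar>y\<bar> < \<bar>x\<bar> \<and> \<Lambda> y < \<Lambda> x"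
proof (cases "G 0 > 0")
  case True
  then show ?thesis using crossings_ordered_pos[OF q \<Lambda> x y] by auto
next
  case False
  with G0 have G0': "0 < - G (- 0)" by simp
  have \<Lambda>': "((\<lambda>t. \<Lambda> (- t)) has_real_derivative - G (- t)) (at t)" for t
    using \<Lambda>[of "- t"] by (simp add: DERIV_mirror)
  have x': "sgn (- G (- t) - hq q t) = sgn (- x - t)" if "\<bar>t\<bar> < pi - theta_q q" for t
  proof -
    have "- G (- t) - hq q t = - (G (- t) - hq q (- t))" "- x - t = - (x - - t)"
      by (simp_all add: hq_minus)
    then show ?thesis using x(2)[of "- t"] that by (simp only: sgn_minus abs_minus_cancel)
  qed
  have y': "sgn (- G (- t) - hq q (t + pi)) = sgn (- y - t)" if "\<bar>t\<bar> < theta_q q" for t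
  proof -
    have "hq q (t + pi) = - hq q (- (t + pi))" by (simp only: hq_minus minus_minus)
    also have "\<dots> = - hq q (- (t + pi) + 2 * pi)" by (simp only: hq_add_2pi)
    also have "- (t + pi) + 2 * pi = - t + pi" by simp
    finally have "- G (- t) - hq q (t + pi) = - (G (- t) - hq q (- t + pi))" by simp
    moreover have "- y - t = - (y - - t)" by simp
    ultimately show ?thesis using y(2)[of "- t"] that by (simp only: sgn_minus abs_minus_cancel)
  qed
  have "\<bar>- x\<bar> < pi - theta_q q" "\<bar>- y\<bar> < theta_q q" using x(1) y(1) by simp_all
  from crossings_ordered_pos[OF q \<Lambda>' this(1) x' this(2) y' G0']
  have "y < 0" "x < y" "\<Lambda> y < \<Lambda> x" by simp_all
  then show ?thesis by simp
qed

lemma Tmap_eq_wrap: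
  fixes \<rho> :: "real \<Rightarrow> real"
  assumes q: "q > 1" and j: "j \<in> {1, 2}"
    and periodic: "\<And>t. deriv (\<lambda>t. ln (\<rho> t)) (t + 2 * pi) = deriv (\<lambda>t. ln (\<rho> t)) t"
    and x: "x \<in> branch q j"
    and unique: "\<And>u. u \<in> branch q j \<Longrightarrow>
      deriv (\<lambda>t. ln (\<rho> t)) (Arg ((-1) ^ (l - 1) * \<eta>) + u) = hq q u \<longleftrightarrow> u = x"
  shows "Tmap \<rho> q j l \<eta> = wrap (Arg ((-1) ^ (l - 1) * \<eta>) + x)"
proof -
  let ?a = "Arg ((-1) ^ (l - 1) * \<eta>)" and ?F = "deriv (\<lambda>t. ln (\<rho> t))"
  define c r where "c = (if j = 1 then 0 else pi)" and "r = (if j = 1 then pi - theta_q q else theta_q q)"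
  have branch: "u \<in> branch q j \<longleftrightarrow> \<bar>u - c\<bar> < r" for u
    using j unfolding branch_def c_def r_def by (auto simp: abs_less_iff)
  have condition: "(if j = 1 then wrap (\<theta> - ?a) \<in> {theta_q q - pi<..<pi - theta_q q}
      else pi - theta_q q < \<bar>wrap (\<theta> - ?a)\<bar>) \<longleftrightarrow> \<bar>wrap (\<theta> - ?a - c)\<bar> < r" for \<theta>
    using j abs_wrap_diff_pi[of "\<theta> - ?a"] unfolding c_def r_def by (auto simp: abs_less_iff)
  have "(THE \<theta>. \<theta> \<in> {-pi<..pi} \<and> ?F \<theta> = hq q (\<theta> - ?a) \<and> \<bar>wrap (\<theta> - ?a - c)\<bar> < r) = wrap (?a + x)"
  proof (rule the_wrap_eqI)
    show "(?F (\<theta> + 2 * pi) = hq q (\<theta> + 2 * pi - ?a)) = (?F \<theta> = hq q (\<theta> - ?a))" for \<theta>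
      using periodic[of \<theta>] hq_add_2pi[of q "\<theta> - ?a"] by (simp add: algebra_simps)
    show "(?F (?a + u) = hq q (?a + u - ?a)) = (u = x)" if "\<bar>u - c\<bar> < r" for u
      using unique branch that by simp
    show "\<bar>x - c\<bar> < r" using x branch by blast
    show "r \<le> pi" using theta_q_bounds[OF q] unfolding r_def by auto
  qed
  then show ?thesis unfolding Tmap_def Let_def condition .
qed

lemma sin_wrap_diff_Arg:
  assumes "\<eta> \<noteq> 0" "l \<in> {1, 2}"
  shows "sin (wrap (Arg ((-1) ^ (l - 1) * \<eta>) + u) - Arg \<eta>) = (-1) ^ (l - 1) * sin u"
proof -
  let ?a = "Arg ((-1) ^ (l - 1) * \<eta>)"
  have "sin (T - Arg \<eta>) = (-1) ^ (l - 1) * sin (T - ?a)" for T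
  proof (cases "l = 1")
    case False
    then have "l = 2" using assms(2) by auto
    have "sin (T - (t + 2 * pi)) = sin (T - t)" for t
      using sin_periodic[of "T - (t + 2 * pi)"] by (simp add: algebra_simps)
    then have "sin (T - Arg (- (- \<eta>))) = sin (T - (Arg (- \<eta>) + pi))"
      using periodic_Arg_minus[of "\<lambda>t. sin (T - t)" "- \<eta>"] assms(1) by simp
    then show ?thesis using \<open>l = 2\<close> by (simp add: sin_diff sin_add cos_add)
  qed simp
  moreover have "sin (wrap (?a + u) - ?a) = sin u"
    using periodic_wrap_add[of sin "?a + u" "- ?a"] by simp
  ultimately show ?thesis by simp
qed

locale bounded_log_curvature =
  fixes \<rho> :: "real \<Rightarrow> real" and q :: real
  assumes q_gt_1: "q > 1"
    and pos: "\<And>t. \<rho> t > 0"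
    and periodic: "\<And>t. \<rho> (t + 2 * pi) = \<rho> t"
    and C2: "C2 \<rho>"
    and curvature: "\<And>t. deriv (deriv (\<lambda>s. ln (\<rho> s))) t < sqrt q / (1 + sqrt q)"
begin

abbreviation log_deriv :: "real \<Rightarrow> real" where
  "log_deriv \<equiv> deriv (\<lambda>t. ln (\<rho> t))"

lemma has_real_derivative_rho: "(\<rho> has_real_derivative deriv \<rho> t) (at t)"
  using C2 unfolding C2_def by (simp add: DERIV_deriv_iff_real_differentiable)

lemma has_real_derivative_ln_rho: "((\<lambda>t. ln (\<rho> t)) has_real_derivative deriv \<rho> t / \<rho> t) (at t)"
  using DERIV_chain2[OF DERIV_ln_divide[OF pos] has_real_derivative_rho] by simp

lemma log_deriv_eq: "log_deriv t = deriv \<rho> t / \<rho> t"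
  using has_real_derivative_ln_rho by (rule DERIV_imp_deriv)

lemma deriv_rho_eq: "deriv \<rho> t = \<rho> t * log_deriv t"
  using pos[of t] by (simp add: log_deriv_eq)

lemma has_real_derivative_log_deriv: "(log_deriv has_real_derivative deriv log_deriv t) (at t)"
proof -
  have "log_deriv = (\<lambda>t. deriv \<rho> t / \<rho> t)"
    by (simp add: fun_eq_iff log_deriv_eq)
  moreover have "\<rho> differentiable at t" "deriv \<rho> differentiable at t"
    using C2 unfolding C2_def by blast+
  ultimately have "log_deriv differentiable at t"
    using pos[of t] by simp
  then show ?thesis by (simp add: DERIV_deriv_iff_real_differentiable)
qed

lemma log_deriv_periodic: "log_deriv (t + 2 * pi) = log_deriv t"
  by (rule deriv_periodic) (simp add: periodic)

lemma log_deriv_crossing: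
  assumes "j \<in> {1, 2}"
  obtains x where "x \<in> branch q j"
    "\<And>t. t \<in> branch q j \<Longrightarrow> sgn (log_deriv (b + t) - hq q t) = sgn (x - t)"
proof -
  have "((\<lambda>t. log_deriv (b + t)) has_real_derivative deriv log_deriv (b + t) * 1) (at t)" for t
    by (rule DERIV_chain2[OF has_real_derivative_log_deriv]) (auto intro!: derivative_eq_intros)
  then have "((\<lambda>t. log_deriv (b + t)) has_real_derivative deriv log_deriv (b + t)) (at t)" for t
    by simp
  from hq_crossing[OF q_gt_1 assms this curvature] that show thesis by blast
qed

lemma Tmap_eq_crossing:
  assumes "j \<in> {1, 2}" and x: "x \<in> branch q j"
    and crossing: "\<And>t. t \<in> branch q j \<Longrightarrow>
      sgn (log_deriv (Arg ((-1) ^ (l - 1) * \<eta>) + t) - hq q t) = sgn (x - t)"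
  shows "Tmap \<rho> q j l \<eta> = wrap (Arg ((-1) ^ (l - 1) * \<eta>) + x)"
  using q_gt_1 assms(1) log_deriv_periodic x
proof (rule Tmap_eq_wrap)
  show "log_deriv (Arg ((-1) ^ (l - 1) * \<eta>) + u) = hq q u \<longleftrightarrow> u = x" if "u \<in> branch q j" for u
    using crossing[OF that] by (auto simp: sgn_0_0)
qed

lemma sgn_deriv_rho: "sgn (deriv \<rho> t) = sgn (log_deriv t)"
  using pos[of t] by (simp add: deriv_rho_eq sgn_mult)

lemma rho_wrap: "\<rho> (wrap t) = \<rho> t"
  by (rule periodic_wrap) (rule periodic)

lemma log_deriv_wrap: "log_deriv (wrap t) = log_deriv t"
  by (rule periodic_wrap) (rule log_deriv_periodic)

text \<open>T_{2,l+1} eta is computed from eta_{l+1} = - eta_l, whose angle is theta_{eta_l} + pi modulo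
  2 pi; so its crossing z on the second branch becomes y = z - pi relative to theta_{eta_l}.\<close>
lemma Tmap_second_branch:
  assumes "\<eta> \<noteq> 0" "l \<in> {1, 2}"
  defines "a \<equiv> Arg ((-1) ^ (l - 1) * \<eta>)"
  obtains y where "\<bar>y\<bar> < theta_q q"
    "\<And>t. \<bar>t\<bar> < theta_q q \<Longrightarrow> sgn (log_deriv (a + t) - hq q (t + pi)) = sgn (y - t)"
    "Tmap \<rho> q 2 (3 - l) \<eta> = wrap (a + y)"
proof -
  define w where "w = (-1) ^ (l - 1) * \<eta>"
  have "w \<noteq> 0" using assms(1) by (simp add: w_def)
  have opposite: "(-1) ^ (3 - l - 1) * \<eta> = - w" using assms(2) by (auto simp: w_def)
  obtain z where z: "z \<in> branch q 2"
    "\<And>t. t \<in> branch q 2 \<Longrightarrow> sgn (log_deriv (Arg (- w) + t) - hq q t) = sgn (z - t)"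
    using log_deriv_crossing[where j = 2 and b = "Arg (- w)"] by auto
  have shift: "f (Arg (- w) + s) = f (a + (s - pi))"
    if periodic_f: "\<And>t. f (t + 2 * pi) = f t" for f :: "real \<Rightarrow> real" and s
  proof -
    have "f (r + 2 * pi + s) = f (r + s)" for r
      using periodic_f[of "r + s"] by (simp add: algebra_simps)
    then have "f (Arg (- w) + s) = f (a + pi + s)"
      using periodic_Arg_minus[where f = "\<lambda>r. f (r + s)"] \<open>w \<noteq> 0\<close> by (simp add: a_def w_def)
    also have "a + pi + s = a + (s - pi) + 2 * pi" by simp
    finally show ?thesis by (simp only: periodic_f)
  qed
  have crossing: "sgn (log_deriv (a + t) - hq q (t + pi)) = sgn (z - pi - t)"
    if "\<bar>t\<bar> < theta_q q" for t
  proof -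
    have "t + pi \<in> branch q 2" using that by (auto simp: branch_def)
    from z(2)[OF this]
    have "sgn (log_deriv (Arg (- w) + (t + pi)) - hq q (t + pi)) = sgn (z - (t + pi))" .
    then show ?thesis
      unfolding shift[where f = log_deriv, OF log_deriv_periodic] by (simp add: algebra_simps)
  qed
  have "wrap (Arg (- w) + z) = wrap (a + (z - pi))"
    by (rule shift[where f = wrap]) (rule wrap_add_2pi)
  moreover have "Tmap \<rho> q 2 (3 - l) \<eta> = wrap (Arg (- w) + z)"
    using Tmap_eq_crossing[of 2 z "3 - l" \<eta>] z opposite by simp
  moreover have "\<bar>z - pi\<bar> < theta_q q" using z(1) by (auto simp: branch_def)
  ultimately show thesis using that crossing by simp
qed

lemma Tmap_crossings:
  assumes "\<eta> \<noteq> 0" "l \<in> {1, 2}"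
  defines "a \<equiv> Arg ((-1) ^ (l - 1) * \<eta>)"
  obtains x y where
    "\<bar>x\<bar> < pi - theta_q q"
    "\<And>t. \<bar>t\<bar> < pi - theta_q q \<Longrightarrow> sgn (log_deriv (a + t) - hq q t) = sgn (x - t)"
    "\<bar>y\<bar> < theta_q q"
    "\<And>t. \<bar>t\<bar> < theta_q q \<Longrightarrow> sgn (log_deriv (a + t) - hq q (t + pi)) = sgn (y - t)"
    "Tmap \<rho> q 1 l \<eta> = wrap (a + x)" "Tmap \<rho> q 2 (3 - l) \<eta> = wrap (a + y)"
proof -
  have branch_1: "t \<in> branch q 1 \<longleftrightarrow> \<bar>t\<bar> < pi - theta_q q" for t
    by (auto simp: branch_def abs_less_iff)
  obtain x where x: "x \<in> branch q 1"
    "\<And>t. t \<in> branch q 1 \<Longrightarrow> sgn (log_deriv (a + t) - hq q t) = sgn (x - t)"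
    using log_deriv_crossing[where j = 1 and b = a] by auto
  moreover have "Tmap \<rho> q 1 l \<eta> = wrap (a + x)"
    unfolding a_def using x by (intro Tmap_eq_crossing) (auto simp: a_def)
  moreover obtain y where "\<bar>y\<bar> < theta_q q"
    "\<And>t. \<bar>t\<bar> < theta_q q \<Longrightarrow> sgn (log_deriv (a + t) - hq q (t + pi)) = sgn (y - t)"
    "Tmap \<rho> q 2 (3 - l) \<eta> = wrap (a + y)"
    using Tmap_second_branch[OF assms(1,2)] unfolding a_def by blast
  ultimately show thesis using that branch_1 by blast
qed

lemma Tmap_sign_identities:
  assumes "cmod \<eta> = 1" "l \<in> {1, 2}"
  shows "let T1 = Tmap \<rho> q 1 l \<eta>; T2 = Tmap \<rho> q 2 (3 - l) \<eta>; s = (-1::real) ^ (l - 1) in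
          sgn (deriv \<rho> T1) = s * sgn (sin (T1 - Arg \<eta>)) \<and>
          s * sgn (sin (T1 - Arg \<eta>)) = s * sgn (sin (T2 - Arg \<eta>)) \<and>
          s * sgn (sin (T2 - Arg \<eta>)) = sgn (deriv \<rho> T2)"
proof -
  have "\<eta> \<noteq> 0" using assms(1) by auto
  define a where "a = Arg ((-1) ^ (l - 1) * \<eta>)"
  define s :: real where "s = (-1) ^ (l - 1)"
  obtain x y where x: "\<bar>x\<bar> < pi - theta_q q"
      "\<And>t. \<bar>t\<bar> < pi - theta_q q \<Longrightarrow> sgn (log_deriv (a + t) - hq q t) = sgn (x - t)"
    and y: "\<bar>y\<bar> < theta_q q"
      "\<And>t. \<bar>t\<bar> < theta_q q \<Longrightarrow> sgn (log_deriv (a + t) - hq q (t + pi)) = sgn (y - t)"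
    and T: "Tmap \<rho> q 1 l \<eta> = wrap (a + x)" "Tmap \<rho> q 2 (3 - l) \<eta> = wrap (a + y)"
    using Tmap_crossings[OF \<open>\<eta> \<noteq> 0\<close> assms(2)] unfolding a_def by blast
  note \<theta> = theta_q_bounds[OF q_gt_1]
  have sgn_sin_T: "s * sgn (sin (wrap (a + u) - Arg \<eta>)) = sgn u" if "\<bar>u\<bar> < pi" for u
  proof -
    have "s * s = 1" using assms(2) by (auto simp: s_def)
    then show ?thesis using sin_wrap_diff_Arg[OF \<open>\<eta> \<noteq> 0\<close> assms(2)] sgn_sin[OF that]
      by (simp add: a_def s_def sgn_mult mult.assoc[symmetric])
  qed
  have "sgn x = sgn (log_deriv a)" "sgn y = sgn (log_deriv a)"
    using x(2)[of 0] y(2)[of 0] \<theta> by simp_all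
  moreover have "log_deriv (a + x) = hq q x" "log_deriv (a + y) = hq q (y + pi)"
    using x(2)[of x] x(1) y(2)[of y] y(1) by (simp_all add: sgn_0_0)
  moreover have "sgn (hq q x) = sgn x" "sgn (hq q (y + pi)) = sgn y"
    using sgn_hq_main_branch[OF q_gt_1 x(1)] sgn_hq_add_pi[OF q_gt_1 y(1)] .
  moreover have "\<bar>x\<bar> < pi" "\<bar>y\<bar> < pi" using x(1) y(1) \<theta> by auto
  ultimately show ?thesis
    unfolding Let_def T s_def[symmetric] sgn_deriv_rho log_deriv_wrap
    using sgn_sin_T by simp
qed

lemma Tmap_ordering:
  assumes "cmod \<eta> = 1" "l \<in> {1, 2}" "deriv \<rho> (Arg ((-1) ^ (l - 1) * \<eta>)) \<noteq> 0"
  shows "let a = Arg ((-1) ^ (l - 1) * \<eta>); T1 = Tmap \<rho> q 1 l \<eta>; T2 = Tmap \<rho> q 2 (3 - l) \<eta> in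
          0 < \<bar>wrap (T2 - a)\<bar> \<and> \<bar>wrap (T2 - a)\<bar> < \<bar>wrap (T1 - a)\<bar> \<and>
          \<bar>wrap (T1 - a)\<bar> < pi - theta_q q \<and>
          \<rho> T2 < \<rho> T1 \<and>
          0 < \<bar>sin (T2 - Arg \<eta>)\<bar> \<and> \<bar>sin (T2 - Arg \<eta>)\<bar> < \<bar>sin (T1 - Arg \<eta>)\<bar>"
proof -
  have "\<eta> \<noteq> 0" using assms(1) by auto
  define a where "a = Arg ((-1) ^ (l - 1) * \<eta>)"
  obtain x y where x: "\<bar>x\<bar> < pi - theta_q q"
      "\<And>t. \<bar>t\<bar> < pi - theta_q q \<Longrightarrow> sgn (log_deriv (a + t) - hq q t) = sgn (x - t)"
    and y: "\<bar>y\<bar> < theta_q q"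
      "\<And>t. \<bar>t\<bar> < theta_q q \<Longrightarrow> sgn (log_deriv (a + t) - hq q (t + pi)) = sgn (y - t)"
    and T: "Tmap \<rho> q 1 l \<eta> = wrap (a + x)" "Tmap \<rho> q 2 (3 - l) \<eta> = wrap (a + y)"
    using Tmap_crossings[OF \<open>\<eta> \<noteq> 0\<close> assms(2)] unfolding a_def by blast
  note \<theta> = theta_q_bounds[OF q_gt_1]
  have "log_deriv (a + 0) \<noteq> 0" using assms(3) pos[of a] by (simp add: a_def deriv_rho_eq)
  moreover have "((\<lambda>t. ln (\<rho> (a + t))) has_real_derivative log_deriv (a + t) * 1) (at t)" for t
    unfolding log_deriv_eq
    by (rule DERIV_chain2[OF has_real_derivative_ln_rho]) (auto intro!: derivative_eq_intros)
  ultimately have "0 < \<bar>y\<bar> \<and> \<bar>y\<bar> < \<bar>x\<bar> \<and> ln (\<rho> (a + y)) < ln (\<rho> (a + x))"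
    using crossings_ordered[OF q_gt_1 _ x y, of "\<lambda>t. ln (\<rho> (a + t))"] by simp
  then have order: "0 < \<bar>y\<bar>" "\<bar>y\<bar> < \<bar>x\<bar>" "\<rho> (a + y) < \<rho> (a + x)"
    using pos by auto
  have "\<bar>x\<bar> < pi" "\<bar>y\<bar> < pi" "\<bar>x\<bar> + \<bar>y\<bar> < pi" using x(1) y(1) \<theta> by auto
  then have "wrap x = x" "wrap y = y" "0 < \<bar>sin y\<bar>" "\<bar>sin y\<bar> < \<bar>sin x\<bar>"
    using wrap_eq_self sgn_sin[of y] order abs_sin_less[OF order(2)]
    by (auto simp: sgn_0_0 sgn_zero_iff abs_less_iff)
  then show ?thesis
    unfolding Let_def a_def[symmetric] T wrap_wrap_diff rho_wrap
      sin_wrap_diff_Arg[OF \<open>\<eta> \<noteq> 0\<close> assms(2), folded a_def]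
    using order x(1) assms(2) by (auto simp: abs_mult)
qed

end

theorem lemma6:
  fixes \<rho> :: "real \<Rightarrow> real" and q :: real
  assumes q: "q > 1"
    and pos: "\<And>t. \<rho> t > 0"
    and per: "\<And>t. \<rho> (t + 2 * pi) = \<rho> t"
    and C2: "C2 \<rho>"
    and curv: "\<And>t. deriv (deriv (\<lambda>s. ln (\<rho> s))) t < sqrt q / (1 + sqrt q)"
  shows
    "(\<forall>\<eta> l. cmod \<eta> = 1 \<longrightarrow> l \<in> {1, 2::nat} \<longrightarrow>
        (let T1 = Tmap \<rho> q 1 l \<eta>; T2 = Tmap \<rho> q 2 (3 - l) \<eta>; s = (-1::real) ^ (l - 1) in
          sgn (deriv \<rho> T1) = s * sgn (sin (T1 - Arg \<eta>)) \<and>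
          s * sgn (sin (T1 - Arg \<eta>)) = s * sgn (sin (T2 - Arg \<eta>)) \<and>
          s * sgn (sin (T2 - Arg \<eta>)) = sgn (deriv \<rho> T2)))
   \<and> (\<forall>\<eta> l. cmod \<eta> = 1 \<longrightarrow> l \<in> {1, 2::nat} \<longrightarrow>
        deriv \<rho> (Arg ((-1) ^ (l - 1) * \<eta>)) \<noteq> 0 \<longrightarrow>
        (let a = Arg ((-1) ^ (l - 1) * \<eta>); T1 = Tmap \<rho> q 1 l \<eta>; T2 = Tmap \<rho> q 2 (3 - l) \<eta> in
          0 < \<bar>wrap (T2 - a)\<bar> \<and> \<bar>wrap (T2 - a)\<bar> < \<bar>wrap (T1 - a)\<bar> \<and>
          \<bar>wrap (T1 - a)\<bar> < pi - theta_q q \<and>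
          \<rho> T2 < \<rho> T1 \<and>
          0 < \<bar>sin (T2 - Arg \<eta>)\<bar> \<and> \<bar>sin (T2 - Arg \<eta>)\<bar> < \<bar>sin (T1 - Arg \<eta>)\<bar>))"
proof -
  interpret bounded_log_curvature \<rho> q
    using assms by unfold_locales
  show ?thesis using Tmap_sign_identities Tmap_ordering by blast
qed

end
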